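(* For any $k\ge1$ and $n\in\mathbb Z$, in $S$: \[E_{k,n}\star E_{k,n}-q^{2k}E_{k,n-1}\star E_{k,n+1}=q^2E_{k+1,n-1}\star E_{k-1,n+1}.\]
   Context: Let $q$ be a formal variable. $S=\bigoplus_{k\ge0}S_k$, $S_k=\mathbb C(q)[x_1^{\pm1},\dots,x_k^{\pm1}]^{S(k)}$, with product $F\star G=\frac{1}{k!\ell!}\mathrm{Sym}_{x_1,\dots,x_{k+\ell}}\big(F(x_1,\dots,x_k)G(x_{k+1},\dots,x_{k+\ell})\prod_{r\le k<r'}\frac{x_r-q^{-2}x_{r'}}{x_r-x_{r'}}\big)$. For $k\ge1$, $E_{k,n}=\prod_{r=1}^kx_r^n\prod_{1\le r\ne s\le k}(x_r-q^{-2}x_s)\in S_k$, and $E_{0,n}=1\in S_0$ (the unit). *)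

theory Defs
  imports "HOL-Computational_Algebra.Polynomial" "HOL-Computational_Algebra.Fraction_Field"
          "HOL-Combinatorics.Permutations"
begin

type_synonym K = "complex poly fract"

definition qq :: K where "qq = Fract [:0, 1:] 1"

text \<open>An element of S_k (a symmetric Laurent polynomial in x_1..x_k) is represented
  by its evaluation function on points x :: nat => K, reading only x 0, ..., x (k-1)
  (0-based indexing: x_i of the paper is x (i-1)).  Since K is infinite, a Laurent
  polynomial is determined by its values at points with pairwise distinct nonzero
  coordinates.\<close>

definition E :: "nat \<Rightarrow> int \<Rightarrow> (nat \<Rightarrow> K) \<Rightarrow> K" where
  "E k n x = (\<Prod>r<k. x r powi n) *
     (\<Prod>r<k. \<Prod>s<k. if r \<noteq> s then x r - inverse (qq ^ 2) * x s else 1)"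

text \<open>Shuffle product of F in S_k and G in S_l, evaluated at x (meaningful when
  x 0, ..., x (k+l-1) are pairwise distinct).  Sym sums over all permutations of the
  k+l variables.\<close>
definition shuffle :: "nat \<Rightarrow> nat \<Rightarrow> ((nat \<Rightarrow> K) \<Rightarrow> K) \<Rightarrow> ((nat \<Rightarrow> K) \<Rightarrow> K)
    \<Rightarrow> (nat \<Rightarrow> K) \<Rightarrow> K" where
  "shuffle k l F G x = inverse (of_nat (fact k * fact l)) *
     (\<Sum>\<sigma> \<in> {\<sigma>. \<sigma> permutes {..<k+l}}.
        F (x \<circ> \<sigma>) * G (\<lambda>i. (x \<circ> \<sigma>) (i + k)) *
        (\<Prod>r<k. \<Prod>r'\<in>{k..<k+l}.
           ((x \<circ> \<sigma>) r - inverse (qq ^ 2) * (x \<circ> \<sigma>) r') / ((x \<circ> \<sigma>) r - (x \<circ> \<sigma>) r')))"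

end

theory Submission
  imports Defs
begin

text \<open>Write \<open>\<tau> = q\<^sup>-\<^sup>2\<close>. Grouping the permutations of the symmetrisation by the set of
  variables they send to the first \<open>k\<close> slots turns a shuffle product of \<open>E\<close>'s into a sum over
  \<open>k\<close>-subsets \<open>A\<close> of the variables: \<open>E\<close>-type factors on \<open>A\<close> and on its complement times the
  kernels between them. Pulling out \<open>(\<Prod>x\<^sub>r)\<^bsup>n-1\<^esup>\<close> reduces the claim to \<open>n = 1\<close>, i.e. to the
  vanishing of a rational function \<open>\<Omega>\<^sub>k\<close> of \<open>2k\<close> variables. \<open>\<Omega>\<^sub>1 = 0\<close> by direct computation.

  For \<open>k \<ge> 2\<close> single out a variable \<open>x\<^sub>v = z\<close> and clear denominators: \<open>\<Omega>\<^sub>k\<close> becomes a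
  polynomial in \<open>z\<close> of degree at most \<open>4k - 1\<close>. It vanishes at \<open>z = x\<^sub>s\<close>, where the terms cancel
  in pairs, and at \<open>z = \<tau>\<^sup>\<plusminus>\<^sup>1 x\<^sub>u\<close>: there the wheel condition kills every term that does not
  separate \<open>u\<close> from \<open>v\<close>, and the remaining ones factor through \<open>\<Omega>\<^sub>k\<^sub>-\<^sub>1\<close> of the other
  \<open>2k - 2\<close> variables, which vanishes by induction. For generic \<open>x\<close> these are \<open>3(2k - 1) > 4k - 1\<close>
  distinct roots, so the polynomial vanishes, in particular at \<open>z = x\<^sub>v\<close>. Genericity is removed
  one coordinate at a time: the same polynomial vanishes as soon as \<open>\<Omega>\<^sub>k\<close> does for all but
  finitely many values of that coordinate.\<close>

definition \<tau> :: K where "\<tau> = inverse (qq ^ 2)"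

lemma qq_power: "qq ^ m = Fract (monom 1 m) 1"
proof (induction m)
  case 0
  then show ?case by (simp add: One_fract_def monom_0 one_pCons)
next
  case (Suc m)
  then show ?case by (simp add: qq_def monom_Suc)
qed

lemma qq_nonzero: "qq \<noteq> 0"
  by (simp add: qq_def Zero_fract_def eq_fract)

lemma \<tau>_nonzero: "\<tau> \<noteq> 0"
  by (simp add: \<tau>_def qq_nonzero)

lemma qq_power_neq_1: "m > 0 \<Longrightarrow> qq ^ m \<noteq> 1"
  by (simp add: qq_power One_fract_def eq_fract monom_eq_1_iff)

lemma \<tau>_power_neq_1:
  assumes "m > 0"
  shows "\<tau> ^ m \<noteq> 1"
proof -
  have "\<tau> ^ m = inverse (qq ^ (2 * m))"
    by (simp add: \<tau>_def power_mult power_inverse)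
  then show ?thesis
    using qq_power_neq_1[of "2 * m"] assms by simp
qed

lemma inj_of_nat_K: "inj (of_nat :: nat \<Rightarrow> K)"
  by (auto simp: inj_on_def of_nat_fract eq_fract)

lemma infinite_UNIV_K: "infinite (UNIV :: K set)"
  by (rule infinite_super[OF subset_UNIV range_inj_infinite[OF inj_of_nat_K]])

section \<open>Shuffle products as sums over subsets\<close>

definition shuffle_kernel :: "(nat \<Rightarrow> K) \<Rightarrow> nat \<Rightarrow> nat \<Rightarrow> K" where
  "shuffle_kernel x r s = (x r - \<tau> * x s) / (x r - x s)"

definition pair_prod :: "(nat \<Rightarrow> K) \<Rightarrow> nat set \<Rightarrow> K" where
  "pair_prod x A = (\<Prod>r\<in>A. \<Prod>s\<in>A. if r \<noteq> s then x r - \<tau> * x s else 1)"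

definition E_on :: "(nat \<Rightarrow> K) \<Rightarrow> int \<Rightarrow> nat set \<Rightarrow> K" where
  "E_on x a A = (\<Prod>r\<in>A. x r powi a) * pair_prod x A"

definition kernel_prod :: "(nat \<Rightarrow> K) \<Rightarrow> nat set \<Rightarrow> nat set \<Rightarrow> K" where
  "kernel_prod x A B = (\<Prod>r\<in>A. \<Prod>s\<in>B. shuffle_kernel x r s)"

definition shuffle_term :: "(nat \<Rightarrow> K) \<Rightarrow> int \<Rightarrow> int \<Rightarrow> nat set \<Rightarrow> nat set \<Rightarrow> K" where
  "shuffle_term x a b V A = E_on x a A * E_on x b (V - A) * kernel_prod x A (V - A)"

definition shuffle_sum :: "(nat \<Rightarrow> K) \<Rightarrow> nat \<Rightarrow> int \<Rightarrow> int \<Rightarrow> nat set \<Rightarrow> K" where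
  "shuffle_sum x k a b V = (\<Sum>A | A \<subseteq> V \<and> card A = k. shuffle_term x a b V A)"

lemma pair_prod_insert:
  assumes "finite A" "u \<notin> A"
  shows "pair_prod x (insert u A)
           = pair_prod x A * (\<Prod>s\<in>A. x u - \<tau> * x s) * (\<Prod>r\<in>A. x r - \<tau> * x u)"
proof -
  let ?f = "\<lambda>r s. if r \<noteq> s then x r - \<tau> * x s else 1"
  have "pair_prod x (insert u A)
          = (\<Prod>s\<in>insert u A. ?f u s) * (\<Prod>r\<in>A. \<Prod>s\<in>insert u A. ?f r s)"
    unfolding pair_prod_def using assms by simp
  also have "(\<Prod>s\<in>insert u A. ?f u s) = (\<Prod>s\<in>A. x u - \<tau> * x s)"
    using assms by (simp, intro prod.cong) auto
  also have "(\<Prod>r\<in>A. \<Prod>s\<in>insert u A. ?f r s) = (\<Prod>r\<in>A. (x r - \<tau> * x u) * (\<Prod>s\<in>A. ?f r s))"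
    using assms by (intro prod.cong) auto
  also have "\<dots> = (\<Prod>r\<in>A. x r - \<tau> * x u) * pair_prod x A"
    unfolding pair_prod_def by (simp add: prod.distrib)
  finally show ?thesis by (simp only: mult_ac)
qed

lemma E_on_insert:
  assumes "finite A" "u \<notin> A"
  shows "E_on x a (insert u A)
           = x u powi a * E_on x a A * (\<Prod>s\<in>A. x u - \<tau> * x s) * (\<Prod>r\<in>A. x r - \<tau> * x u)"
  unfolding E_on_def using assms by (simp add: pair_prod_insert algebra_simps)

lemma kernel_prod_insert_left:
  "finite A \<Longrightarrow> u \<notin> A
     \<Longrightarrow> kernel_prod x (insert u A) B = (\<Prod>s\<in>B. shuffle_kernel x u s) * kernel_prod x A B"
  unfolding kernel_prod_def by simp

lemma kernel_prod_insert_right: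
  "finite B \<Longrightarrow> v \<notin> B
     \<Longrightarrow> kernel_prod x A (insert v B) = (\<Prod>r\<in>A. shuffle_kernel x r v) * kernel_prod x A B"
  unfolding kernel_prod_def by (simp add: prod.distrib)

lemma pair_prod_upd: "v \<notin> A \<Longrightarrow> pair_prod (x(v := z)) A = pair_prod x A"
  unfolding pair_prod_def by (intro prod.cong refl) auto

lemma E_on_upd:
  assumes "v \<notin> A"
  shows "E_on (x(v := z)) a A = E_on x a A"
proof -
  have "(\<Prod>r\<in>A. (x(v := z)) r powi a) = (\<Prod>r\<in>A. x r powi a)"
    using assms by (intro prod.cong) auto
  with assms show ?thesis
    unfolding E_on_def by (simp add: pair_prod_upd)
qed

lemma kernel_prod_upd: "v \<notin> A \<Longrightarrow> v \<notin> B \<Longrightarrow> kernel_prod (x(v := z)) A B = kernel_prod x A B"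
  unfolding kernel_prod_def shuffle_kernel_def by (intro prod.cong refl) auto

lemma pair_prod_eq_0:
  assumes "finite A" "u \<in> A" "v \<in> A" "u \<noteq> v" "x v = \<tau> * x u"
  shows "pair_prod x A = 0"
proof -
  have "(\<Prod>s\<in>A. if v \<noteq> s then x v - \<tau> * x s else 1) = 0"
    using assms by (intro prod_zero) auto
  then show ?thesis
    unfolding pair_prod_def using assms by (intro prod_zero) auto
qed

lemma sum_subsets_separating:
  assumes "finite V" "u \<in> V" "v \<in> V" "u \<noteq> v" "k \<ge> 1"
  shows "(\<Sum>A | A \<subseteq> V \<and> card A = k \<and> u \<in> A \<and> v \<notin> A. g A)
           = (\<Sum>C | C \<subseteq> V - {u, v} \<and> card C = k - 1. g (insert u C))"
proof -
  let ?C = "{C. C \<subseteq> V - {u, v} \<and> card C = k - 1}"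
  have inj: "inj_on (insert u) ?C"
    by (rule inj_onI)
      (metis Diff_iff insert_absorb insert_commute insert_ident insertCI mem_Collect_eq subsetD)
  have "{A. A \<subseteq> V \<and> card A = k \<and> u \<in> A \<and> v \<notin> A} = insert u ` ?C"
  proof (intro equalityI subsetI)
    fix A assume A: "A \<in> {A. A \<subseteq> V \<and> card A = k \<and> u \<in> A \<and> v \<notin> A}"
    then have "A = insert u (A - {u})" by auto
    moreover have "A - {u} \<in> ?C"
      using A assms by (auto simp: card_Diff_singleton finite_subset)
    ultimately show "A \<in> insert u ` ?C" by blast
  next
    fix A assume "A \<in> insert u ` ?C"
    then obtain C where C: "C \<subseteq> V - {u, v}" "card C = k - 1" "A = insert u C" by auto
    moreover have "finite C" "u \<notin> C" using C assms finite_subset by auto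
    ultimately show "A \<in> {A. A \<subseteq> V \<and> card A = k \<and> u \<in> A \<and> v \<notin> A}" using assms by auto
  qed
  then show ?thesis using sum.reindex[OF inj] by simp
qed

lemma exists_permutes_image_eq:
  assumes "finite V" "S \<subseteq> V" "A \<subseteq> V" "card A = card S"
  shows "\<exists>\<rho>. \<rho> permutes V \<and> \<rho> ` S = A"
proof -
  have fS: "finite S" and fA: "finite A" using assms finite_subset by auto
  obtain f where f: "bij_betw f S A" using finite_same_card_bij[OF fS fA] assms(4) by metis
  have "card (V - S) = card (V - A)" using assms fS fA by (simp add: card_Diff_subset)
  then obtain h where h: "bij_betw h (V - S) (V - A)"
    using finite_same_card_bij[of "V - S" "V - A"] assms(1) by auto
  define \<rho> where "\<rho> y = (if y \<in> S then f y else if y \<in> V then h y else y)" for y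
  have b1: "bij_betw \<rho> S A"
    using f by (rule bij_betw_cong[THEN iffD1, rotated]) (simp add: \<rho>_def)
  have b2: "bij_betw \<rho> (V - S) (V - A)"
    using h by (rule bij_betw_cong[THEN iffD1, rotated]) (simp add: \<rho>_def)
  have "bij_betw \<rho> (S \<union> (V - S)) (A \<union> (V - A))"
    by (rule bij_betw_combine[OF b1 b2]) auto
  then have "bij_betw \<rho> V V" using assms by (simp add: Un_absorb1 Un_Diff_cancel)
  then have "\<rho> permutes V"
    by (rule bij_imp_permutes) (simp add: \<rho>_def, use assms in blast)
  moreover have "\<rho> ` S = A" using b1 by (simp add: bij_betw_def)
  ultimately show ?thesis by blast
qed

lemma card_permutes_image_eq:
  assumes "finite V" "S \<subseteq> V" "A \<subseteq> V" "card A = card S"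
  shows "card {\<sigma>. \<sigma> permutes V \<and> \<sigma> ` S = A} = card {\<sigma>. \<sigma> permutes V \<and> \<sigma> ` S = S}"
proof -
  obtain \<rho> where \<rho>: "\<rho> permutes V" "\<rho> ` S = A"
    using exists_permutes_image_eq[OF assms] by blast
  have inv: "inv \<rho> permutes V" "inv \<rho> ` A = S"
    using \<rho> by (simp_all add: permutes_inv image_comp permutes_inv_o(2) flip: \<rho>(2))
  have "bij_betw ((\<circ>) \<rho>) {\<sigma>. \<sigma> permutes V \<and> \<sigma> ` S = S} {\<sigma>. \<sigma> permutes V \<and> \<sigma> ` S = A}"
  proof (rule bij_betwI[where g = "(\<circ>) (inv \<rho>)"])
    show "(\<circ>) \<rho> \<in> {\<sigma>. \<sigma> permutes V \<and> \<sigma> ` S = S} \<rightarrow> {\<sigma>. \<sigma> permutes V \<and> \<sigma> ` S = A}"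
    proof
      fix \<sigma> assume "\<sigma> \<in> {\<sigma>. \<sigma> permutes V \<and> \<sigma> ` S = S}"
      then have "\<sigma> permutes V" "\<sigma> ` S = S" by auto
      with \<rho> show "\<rho> \<circ> \<sigma> \<in> {\<sigma>. \<sigma> permutes V \<and> \<sigma> ` S = A}"
        by (metis (mono_tags) image_comp mem_Collect_eq permutes_compose)
    qed
    show "(\<circ>) (inv \<rho>) \<in> {\<sigma>. \<sigma> permutes V \<and> \<sigma> ` S = A} \<rightarrow> {\<sigma>. \<sigma> permutes V \<and> \<sigma> ` S = S}"
    proof
      fix \<sigma> assume "\<sigma> \<in> {\<sigma>. \<sigma> permutes V \<and> \<sigma> ` S = A}"
      then have "\<sigma> permutes V" "\<sigma> ` S = A" by auto
      with inv show "inv \<rho> \<circ> \<sigma> \<in> {\<sigma>. \<sigma> permutes V \<and> \<sigma> ` S = S}"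
        by (metis (mono_tags) image_comp mem_Collect_eq permutes_compose)
    qed
    show "inv \<rho> \<circ> (\<rho> \<circ> \<sigma>) = \<sigma>" for \<sigma>
      using \<rho>(1) by (metis comp_assoc permutes_inv_o(2) id_comp)
    show "\<rho> \<circ> (inv \<rho> \<circ> \<sigma>) = \<sigma>" for \<sigma>
      using \<rho>(1) by (metis comp_assoc permutes_inv_o(1) id_comp)
  qed
  then show ?thesis by (simp add: bij_betw_same_card)
qed

lemma sum_permutes_group_image:
  assumes "finite V" "S \<subseteq> V"
  shows "(\<Sum>\<sigma> | \<sigma> permutes V. g (\<sigma> ` S))
       = (\<Sum>A | A \<subseteq> V \<and> card A = card S. of_nat (card {\<sigma>. \<sigma> permutes V \<and> \<sigma> ` S = A}) * g A)"
proof -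
  have "(\<Sum>\<sigma> | \<sigma> permutes V. g (\<sigma> ` S))
      = (\<Sum>A | A \<subseteq> V \<and> card A = card S. \<Sum>\<sigma> | \<sigma> \<in> {\<sigma>. \<sigma> permutes V} \<and> \<sigma> ` S = A. g (\<sigma> ` S))"
  proof (rule sum.group[symmetric])
    show "finite {\<sigma>. \<sigma> permutes V}" using assms(1) by (rule finite_permutations)
    show "finite {A. A \<subseteq> V \<and> card A = card S}"
      using assms(1) by (auto intro: finite_subset[of _ "Pow V"])
    show "(\<lambda>\<sigma>. \<sigma> ` S) ` {\<sigma>. \<sigma> permutes V} \<subseteq> {A. A \<subseteq> V \<and> card A = card S}"
      using assms(2) by (auto simp: card_image permutes_inj_on dest: permutes_image)
  qed
  also have "\<dots> = (\<Sum>A | A \<subseteq> V \<and> card A = card S. of_nat (card {\<sigma>. \<sigma> permutes V \<and> \<sigma> ` S = A}) * g A)"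
    by (intro sum.cong refl) auto
  finally show ?thesis .
qed

lemma card_permutes_stabiliser:
  assumes "finite V" "S \<subseteq> V"
  shows "card {\<sigma>. \<sigma> permutes V \<and> \<sigma> ` S = S} = fact (card S) * fact (card V - card S)"
proof -
  let ?c = "card {\<sigma>. \<sigma> permutes V \<and> \<sigma> ` S = S}"
  have "fact (card V) = card {\<sigma>. \<sigma> permutes V}"
    using card_permutations assms(1) by metis
  also have "\<dots> = (\<Sum>A | A \<subseteq> V \<and> card A = card S. card {\<sigma>. \<sigma> permutes V \<and> \<sigma> ` S = A})"
    using sum_permutes_group_image[OF assms, of "\<lambda>_. 1 :: nat"] by simp
  also have "\<dots> = (\<Sum>A | A \<subseteq> V \<and> card A = card S. ?c)"
    by (intro sum.cong refl) (simp add: card_permutes_image_eq[OF assms])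
  also have "\<dots> = (card V choose card S) * ?c"
    using n_subsets[OF assms(1)] by simp
  finally have "fact (card V) = (card V choose card S) * ?c" .
  moreover have le: "card S \<le> card V" using assms by (simp add: card_mono)
  then have "fact (card V) = (card V choose card S) * (fact (card S) * fact (card V - card S))"
    using binomial_fact_lemma[OF le] by (simp add: mult_ac)
  ultimately show ?thesis using le by simp
qed

lemma sum_permutes_image:
  fixes g :: "'a set \<Rightarrow> 'b::semiring_1"
  assumes "finite V" "S \<subseteq> V"
  shows "(\<Sum>\<sigma> | \<sigma> permutes V. g (\<sigma> ` S))
       = of_nat (fact (card S) * fact (card V - card S)) * (\<Sum>A | A \<subseteq> V \<and> card A = card S. g A)"
  unfolding sum_permutes_group_image[OF assms] sum_distrib_left
  by (intro sum.cong refl)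
    (simp add: card_permutes_image_eq[OF assms] card_permutes_stabiliser[OF assms])

lemma E_comp_eq_E_on:
  assumes "inj_on h {..<k}"
  shows "E k a (x \<circ> h) = E_on x a (h ` {..<k})"
proof -
  have "(\<Prod>r\<in>h ` {..<k}. x r powi a) = (\<Prod>r<k. (x \<circ> h) r powi a)"
    using prod.reindex[OF assms] by (simp add: comp_def)
  moreover have "pair_prod x (h ` {..<k})
      = (\<Prod>r<k. \<Prod>s<k. if r \<noteq> s then (x \<circ> h) r - inverse (qq^2) * (x \<circ> h) s else 1)"
  proof -
    have "pair_prod x (h ` {..<k})
        = (\<Prod>r<k. \<Prod>s<k. if h r \<noteq> h s then x (h r) - \<tau> * x (h s) else 1)"
      unfolding pair_prod_def by (simp add: prod.reindex[OF assms])
    also have "\<dots> = (\<Prod>r<k. \<Prod>s<k. if r \<noteq> s then (x \<circ> h) r - inverse (qq^2) * (x \<circ> h) s else 1)"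
      using inj_on_eq_iff[OF assms] by (intro prod.cong refl) (simp add: \<tau>_def)
    finally show ?thesis .
  qed
  ultimately show ?thesis unfolding E_def E_on_def by simp
qed

lemma shuffle_summand_eq_shuffle_term:
  assumes \<sigma>: "\<sigma> permutes {..<k+l}"
  shows "E k a (x \<circ> \<sigma>) * E l b (\<lambda>i. (x \<circ> \<sigma>) (i + k)) *
           (\<Prod>r<k. \<Prod>r'\<in>{k..<k+l}.
              ((x \<circ> \<sigma>) r - inverse (qq ^ 2) * (x \<circ> \<sigma>) r') / ((x \<circ> \<sigma>) r - (x \<circ> \<sigma>) r'))
         = shuffle_term x a b {..<k+l} (\<sigma> ` {..<k})"
proof -
  have inj: "inj_on \<sigma> X" for X using permutes_inj_on[OF \<sigma>] .
  have shift: "(\<lambda>i. i + k) ` {..<l} = {k..<k+l}"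
    by (simp add: lessThan_atLeast0 image_add_atLeastLessThan add.commute)
  have complement: "\<sigma> ` {k..<k+l} = {..<k+l} - \<sigma> ` {..<k}"
  proof -
    have "\<sigma> ` ({..<k+l} - {..<k}) = \<sigma> ` {..<k+l} - \<sigma> ` {..<k}"
      by (rule inj_on_image_set_diff[OF inj[of "{..<k+l}"]]) auto
    then show ?thesis using permutes_image[OF \<sigma>] by simp
  qed
  have "inj_on (\<sigma> \<circ> (\<lambda>i. i + k)) {..<l}"
    using inj by (intro comp_inj_on) (auto simp: inj_on_def)
  moreover have "(\<sigma> \<circ> (\<lambda>i. i + k)) ` {..<l} = {..<k+l} - \<sigma> ` {..<k}"
    by (metis image_comp shift complement)
  ultimately have E2: "E l b (\<lambda>i. (x \<circ> \<sigma>) (i + k)) = E_on x b ({..<k+l} - \<sigma> ` {..<k})"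
    using E_comp_eq_E_on[of "\<sigma> \<circ> (\<lambda>i. i + k)" l b x] by (simp add: comp_def)
  have "kernel_prod x (\<sigma> ` {..<k}) (\<sigma> ` {k..<k+l})
      = (\<Prod>r<k. \<Prod>r'\<in>{k..<k+l}. shuffle_kernel x (\<sigma> r) (\<sigma> r'))"
    unfolding kernel_prod_def by (simp add: prod.reindex[OF inj])
  then have "(\<Prod>r<k. \<Prod>r'\<in>{k..<k+l}.
              ((x \<circ> \<sigma>) r - inverse (qq ^ 2) * (x \<circ> \<sigma>) r') / ((x \<circ> \<sigma>) r - (x \<circ> \<sigma>) r'))
      = kernel_prod x (\<sigma> ` {..<k}) ({..<k+l} - \<sigma> ` {..<k})"
    by (simp add: complement shuffle_kernel_def \<tau>_def)
  with E2 show ?thesis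
    unfolding shuffle_term_def by (simp add: E_comp_eq_E_on[OF inj])
qed

lemma shuffle_eq_shuffle_sum: "shuffle k l (E k a) (E l b) x = shuffle_sum x k a b {..<k+l}"
proof -
  have "of_nat (fact k * fact l) \<noteq> (0 :: K)"
    using inj_eq[OF inj_of_nat_K, of "fact k * fact l" 0] by simp
  moreover have "shuffle k l (E k a) (E l b) x = inverse (of_nat (fact k * fact l))
      * (\<Sum>\<sigma> | \<sigma> permutes {..<k+l}. shuffle_term x a b {..<k+l} (\<sigma> ` {..<k}))"
    unfolding shuffle_def
    by (intro arg_cong[where f = "\<lambda>y. _ * y"] sum.cong refl shuffle_summand_eq_shuffle_term) simp
  moreover have "(\<Sum>\<sigma> | \<sigma> permutes {..<k+l}. shuffle_term x a b {..<k+l} (\<sigma> ` {..<k}))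
      = of_nat (fact k * fact l) * shuffle_sum x k a b {..<k+l}"
    using sum_permutes_image[of "{..<k+l}" "{..<k}" "shuffle_term x a b {..<k+l}"]
    by (simp add: shuffle_sum_def)
  ultimately show ?thesis by (simp del: of_nat_mult)
qed

lemma shuffle_sum_shift:
  assumes "finite V" "\<forall>i\<in>V. x i \<noteq> 0"
  shows "shuffle_sum x k (a + c) (b + c) V = (\<Prod>r\<in>V. x r powi c) * shuffle_sum x k a b V"
  unfolding shuffle_sum_def sum_distrib_left
proof (intro sum.cong refl)
  fix A assume "A \<in> {A. A \<subseteq> V \<and> card A = k}"
  then have A: "A \<subseteq> V" by simp
  have shift: "E_on x (e + c) B = (\<Prod>r\<in>B. x r powi c) * E_on x e B" if "B \<subseteq> V" for B e
  proof -
    have "(\<Prod>r\<in>B. x r powi (e + c)) = (\<Prod>r\<in>B. x r powi c * x r powi e)"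
      using that assms(2) by (intro prod.cong refl) (auto simp: power_int_add)
    then show ?thesis unfolding E_on_def by (simp add: prod.distrib mult_ac)
  qed
  have "(\<Prod>r\<in>V. x r powi c) = (\<Prod>r\<in>A. x r powi c) * (\<Prod>r\<in>V - A. x r powi c)"
    using prod.subset_diff[OF A assms(1)] by (simp add: mult_ac)
  then show "shuffle_term x (a + c) (b + c) V A = (\<Prod>r\<in>V. x r powi c) * shuffle_term x a b V A"
    unfolding shuffle_term_def shift[OF A] shift[OF Diff_subset] by (simp add: mult_ac)
qed

section \<open>The defect and the wheel condition\<close>

text \<open>The function \<open>\<Omega>\<^sub>k\<close>: the relation for \<open>n = 1\<close>, with \<open>q\<^sup>2\<^sup>k = \<tau>\<^sup>-\<^sup>k\<close>.\<close>
definition defect :: "(nat \<Rightarrow> K) \<Rightarrow> nat \<Rightarrow> nat set \<Rightarrow> K" where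
  "defect x k V = shuffle_sum x k 1 1 V - inverse (\<tau> ^ k) * shuffle_sum x k 0 2 V
                  - inverse \<tau> * shuffle_sum x (k + 1) 0 2 V"

lemma defect_card_2:
  assumes "card V = 2" "inj_on x V"
  shows "defect x 1 V = 0"
proof -
  obtain a b where V: "V = {a, b}" "a \<noteq> b" using assms(1) by (meson card_2_iff)
  have xab: "x a - x b \<noteq> 0" using assms(2) V by (auto simp: inj_on_def)
  have "{A. A \<subseteq> {a, b} \<and> card A = 1} = {{a}, {b}}"
    using V(2) by (auto simp: card_1_singleton_iff)
  then have sum1: "shuffle_sum x 1 c d V = x a powi c * x b powi d * shuffle_kernel x a b
      + x b powi c * x a powi d * shuffle_kernel x b a" for c d
    using V by (simp add: shuffle_sum_def shuffle_term_def E_on_def pair_prod_def kernel_prod_def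
        insert_Diff_if)
  have "{A. A \<subseteq> V \<and> card A = 2} = {V}"
  proof (intro equalityI subsetI)
    fix A assume "A \<in> {A. A \<subseteq> V \<and> card A = 2}"
    then show "A \<in> {V}" using assms(1) V by (simp add: card_subset_eq)
  qed (use assms(1) in auto)
  then have sum2: "shuffle_sum x 2 0 2 V = (x a - \<tau> * x b) * (x b - \<tau> * x a)"
    unfolding shuffle_sum_def
    using V by (simp add: shuffle_term_def E_on_def pair_prod_def kernel_prod_def)
  have kba: "shuffle_kernel x b a = (\<tau> * x a - x b) / (x a - x b)"
    unfolding shuffle_kernel_def by (metis minus_diff_eq minus_divide_divide)
  have "shuffle_kernel x a b + shuffle_kernel x b a = (1 + \<tau>) * (x a - x b) / (x a - x b)"
    unfolding kba shuffle_kernel_def[of x a b]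
    by (simp add: add_divide_distrib[symmetric] algebra_simps)
  then have sum_kernels: "shuffle_kernel x a b + shuffle_kernel x b a = 1 + \<tau>"
    using xab by simp
  have "x b ^ 2 * shuffle_kernel x a b + x a ^ 2 * shuffle_kernel x b a
      = (\<tau> * (x a ^ 2 + x a * x b + x b ^ 2) - x a * x b) * (x a - x b) / (x a - x b)"
    unfolding kba shuffle_kernel_def[of x a b]
    by (simp add: times_divide_eq_right[symmetric] add_divide_distrib[symmetric] algebra_simps
        power2_eq_square)
  then have weighted_sum_kernels:
    "x b ^ 2 * shuffle_kernel x a b + x a ^ 2 * shuffle_kernel x b a
      = \<tau> * (x a ^ 2 + x a * x b + x b ^ 2) - x a * x b"
    using xab by simp
  have "defect x 1 V = x a * x b * (shuffle_kernel x a b + shuffle_kernel x b a)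
      - inverse \<tau> * (x b ^ 2 * shuffle_kernel x a b + x a ^ 2 * shuffle_kernel x b a)
      - inverse \<tau> * ((x a - \<tau> * x b) * (x b - \<tau> * x a))"
    unfolding defect_def sum1 one_add_one sum2 by (simp add: algebra_simps power2_eq_square)
  also have "\<dots> = 0"
    unfolding sum_kernels weighted_sum_kernels using \<tau>_nonzero
    by (simp add: field_simps power2_eq_square)
  finally show ?thesis .
qed

definition wheel_factor :: "(nat \<Rightarrow> K) \<Rightarrow> nat \<Rightarrow> nat \<Rightarrow> K" where
  "wheel_factor x u w = (x u - \<tau> * x w) * (x w - \<tau>\<^sup>2 * x u)"

lemma shuffle_term_wheel_eq_0:
  assumes "finite V" "u \<in> V" "v \<in> V" "u \<noteq> v" "x v = \<tau> * x u"
    and "A \<subseteq> V" "\<not> (u \<in> A \<and> v \<notin> A)"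
  shows "shuffle_term x a b V A = 0"
proof -
  have fA: "finite A" using assms(1,6) finite_subset by blast
  consider "u \<in> A" "v \<in> A" | "u \<notin> A" "v \<notin> A" | "v \<in> A" "u \<notin> A"
    using assms(7) by blast
  then show ?thesis
  proof cases
    case 1
    then have "pair_prod x A = 0" using pair_prod_eq_0[OF fA] assms by blast
    then show ?thesis by (simp add: shuffle_term_def E_on_def)
  next
    case 2
    then have "pair_prod x (V - A) = 0" using pair_prod_eq_0[of "V - A"] assms by blast
    then show ?thesis by (simp add: shuffle_term_def E_on_def)
  next
    case 3
    have "shuffle_kernel x v u = 0" unfolding shuffle_kernel_def using assms(5) by simp
    then have "kernel_prod x A (V - A) = 0"
      unfolding kernel_prod_def using 3 assms fA by (intro prod_zero) (auto intro!: prod_zero)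
    then show ?thesis by (simp add: shuffle_term_def)
  qed
qed

lemma wheel_factor_eq_left:
  assumes "x v = \<tau> * x u" "x r \<noteq> x v"
  shows "(x u - \<tau> * x r) * (x r - \<tau> * x u) * shuffle_kernel x r v = wheel_factor x u r"
proof -
  have "x r - \<tau> * x u \<noteq> 0" using assms by simp
  then show ?thesis
    unfolding shuffle_kernel_def wheel_factor_def assms(1)
    by (simp add: field_simps power2_eq_square)
qed

lemma wheel_factor_eq_right:
  assumes "x v = \<tau> * x u" "x u \<noteq> x r"
  shows "(x v - \<tau> * x r) * (x r - \<tau> * x v) * shuffle_kernel x u r = \<tau> * wheel_factor x u r"
proof -
  have "x u - x r \<noteq> 0" using assms by simp
  then show ?thesis
    unfolding shuffle_kernel_def wheel_factor_def assms(1)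
    by (simp add: field_simps power2_eq_square)
qed

lemma shuffle_term_wheel_insert:
  assumes V: "finite V" "u \<in> V" "v \<in> V" "u \<noteq> v" and inj: "inj_on x V"
    and xv: "x v = \<tau> * x u" and C: "C \<subseteq> V - {u, v}"
  shows "shuffle_term x a b V (insert u C)
           = x u powi a * x v powi b * shuffle_kernel x u v * \<tau> ^ card (V - {u, v} - C)
             * (\<Prod>w\<in>V - {u, v}. wheel_factor x u w) * shuffle_term x a b (V - {u, v}) C"
proof -
  define D where "D = V - {u, v} - C"
  have fC: "finite C" and fD: "finite D" using C V(1) finite_subset unfolding D_def by auto
  have uvC: "u \<notin> C" "v \<notin> C" and uvD: "u \<notin> D" "v \<notin> D" using C unfolding D_def by auto
  have VuC: "V - insert u C = insert v D" using C V unfolding D_def by auto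
  have side_u: "(\<Prod>s\<in>C. x u - \<tau> * x s) * (\<Prod>r\<in>C. x r - \<tau> * x u)
      * (\<Prod>r\<in>C. shuffle_kernel x r v) = (\<Prod>w\<in>C. wheel_factor x u w)"
    unfolding prod.distrib[symmetric] using inj C V
    by (intro prod.cong refl wheel_factor_eq_left[OF xv]) (auto dest: inj_onD)
  have side_v: "(\<Prod>s\<in>D. x v - \<tau> * x s) * (\<Prod>r\<in>D. x r - \<tau> * x v)
      * (\<Prod>s\<in>D. shuffle_kernel x u s) = \<tau> ^ card D * (\<Prod>w\<in>D. wheel_factor x u w)"
    unfolding prod.distrib[symmetric] prod_constant[symmetric] using inj V unfolding D_def
    by (intro prod.cong refl wheel_factor_eq_right[OF xv]) (auto dest: inj_onD)
  have wheel_split: "(\<Prod>w\<in>V - {u, v}. wheel_factor x u w)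
      = (\<Prod>w\<in>C. wheel_factor x u w) * (\<Prod>w\<in>D. wheel_factor x u w)"
    using C prod.union_disjoint[OF fC fD, of "wheel_factor x u"] unfolding D_def
    by (metis Diff_disjoint Diff_partition)
  have kernels: "kernel_prod x (insert u C) (insert v D) = shuffle_kernel x u v
      * (\<Prod>s\<in>D. shuffle_kernel x u s) * (\<Prod>r\<in>C. shuffle_kernel x r v) * kernel_prod x C D"
    using fC fD uvC uvD by (simp add: kernel_prod_insert_left kernel_prod_insert_right)
  have "shuffle_term x a b V (insert u C)
      = x u powi a * x v powi b * shuffle_kernel x u v
        * (E_on x a C * E_on x b D * kernel_prod x C D)
        * ((\<Prod>s\<in>C. x u - \<tau> * x s) * (\<Prod>r\<in>C. x r - \<tau> * x u)
           * (\<Prod>r\<in>C. shuffle_kernel x r v))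
        * ((\<Prod>s\<in>D. x v - \<tau> * x s) * (\<Prod>r\<in>D. x r - \<tau> * x v)
           * (\<Prod>s\<in>D. shuffle_kernel x u s))"
    unfolding shuffle_term_def VuC E_on_insert[OF fC uvC(1)] E_on_insert[OF fD uvD(2)] kernels
    by (simp only: mult_ac)
  also have "\<dots> = x u powi a * x v powi b * shuffle_kernel x u v * \<tau> ^ card D
        * (\<Prod>w\<in>V - {u, v}. wheel_factor x u w) * (E_on x a C * E_on x b D * kernel_prod x C D)"
    unfolding side_u side_v wheel_split by (simp only: mult_ac)
  also have "E_on x a C * E_on x b D * kernel_prod x C D = shuffle_term x a b (V - {u, v}) C"
    by (simp add: shuffle_term_def D_def)
  finally show ?thesis by (simp add: D_def)
qed

lemma shuffle_sum_wheel:
  assumes V: "finite V" "u \<in> V" "v \<in> V" "u \<noteq> v" and inj: "inj_on x V"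
    and xv: "x v = \<tau> * x u" and k: "1 \<le> k" "k < card V"
  shows "shuffle_sum x k a b V
           = x u powi a * x v powi b * shuffle_kernel x u v * \<tau> ^ (card V - k - 1)
             * (\<Prod>w\<in>V - {u, v}. wheel_factor x u w) * shuffle_sum x (k - 1) a b (V - {u, v})"
proof -
  let ?c = "x u powi a * x v powi b * shuffle_kernel x u v * \<tau> ^ (card V - k - 1)
             * (\<Prod>w\<in>V - {u, v}. wheel_factor x u w)"
  have "shuffle_sum x k a b V
      = (\<Sum>A | A \<subseteq> V \<and> card A = k \<and> u \<in> A \<and> v \<notin> A. shuffle_term x a b V A)"
    unfolding shuffle_sum_def
    by (rule sum.mono_neutral_right)
      (use V xv in \<open>auto intro: finite_subset[of _ "Pow V"] shuffle_term_wheel_eq_0\<close>)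
  also have "\<dots> = (\<Sum>C | C \<subseteq> V - {u, v} \<and> card C = k - 1. shuffle_term x a b V (insert u C))"
    by (rule sum_subsets_separating[OF V k(1)])
  also have "\<dots> = (\<Sum>C | C \<subseteq> V - {u, v} \<and> card C = k - 1. ?c * shuffle_term x a b (V - {u, v}) C)"
  proof (intro sum.cong refl)
    fix C assume C: "C \<in> {C. C \<subseteq> V - {u, v} \<and> card C = k - 1}"
    then have "card (V - {u, v} - C) = card (V - {u, v}) - card C"
      using V(1) by (intro card_Diff_subset) (auto intro: finite_subset)
    moreover have "card (V - {u, v}) = card V - 2"
      using V by (simp add: card_Diff_subset)
    ultimately have "card (V - {u, v} - C) = card V - k - 1"
      using C k by simp
    with C show "shuffle_term x a b V (insert u C) = ?c * shuffle_term x a b (V - {u, v}) C"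
      using shuffle_term_wheel_insert[OF V inj xv] by simp
  qed
  finally show ?thesis by (simp add: shuffle_sum_def sum_distrib_left)
qed

lemma defect_wheel:
  assumes V: "finite V" "card V = 2 * k" "u \<in> V" "v \<in> V" "u \<noteq> v" and inj: "inj_on x V"
    and xv: "x v = \<tau> * x u" and k: "2 \<le> k"
    and defect_less: "defect x (k - 1) (V - {u, v}) = 0"
  shows "defect x k V = 0"
proof -
  obtain j where j: "k = Suc (Suc j)" using k by (metis add_2_eq_Suc le_Suc_ex)
  let ?G = "\<Prod>w\<in>V - {u, v}. wheel_factor x u w"
  let ?V = "V - {u, v}"
  let ?c = "shuffle_kernel x u v * ?G"
  have w11: "shuffle_sum x k 1 1 V = x u * x v * ?c * \<tau> ^ Suc j * shuffle_sum x (Suc j) 1 1 ?V"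
   and w02: "shuffle_sum x k 0 2 V = x v ^ 2 * ?c * \<tau> ^ Suc j * shuffle_sum x (Suc j) 0 2 ?V"
   and w02': "shuffle_sum x (k + 1) 0 2 V
      = x v ^ 2 * ?c * \<tau> ^ j * shuffle_sum x (Suc (Suc j)) 0 2 ?V"
    using shuffle_sum_wheel[OF V(1,3,4,5) inj xv] V(2) j by (simp_all add: mult_ac)
  have less: "shuffle_sum x (Suc j) 1 1 ?V = inverse (\<tau> ^ Suc j) * shuffle_sum x (Suc j) 0 2 ?V
      + inverse \<tau> * shuffle_sum x (Suc (Suc j)) 0 2 ?V"
    using defect_less j unfolding defect_def by (simp add: algebra_simps)
  show ?thesis
    unfolding defect_def w11 w02 w02' less unfolding xv j
    using \<tau>_nonzero by (simp add: field_simps power2_eq_square)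
qed

section \<open>Clearing denominators in one variable\<close>

definition polyfun :: "(K \<Rightarrow> K) \<Rightarrow> nat \<Rightarrow> bool" where
  "polyfun f d \<longleftrightarrow> (\<exists>p. degree p \<le> d \<and> (\<forall>z. f z = poly p z))"

lemma polyfun_const: "polyfun (\<lambda>z. c) d"
  unfolding polyfun_def by (rule exI[of _ "[:c:]"]) simp

lemma polyfun_linear: "polyfun (\<lambda>z. a * z + b) 1"
  unfolding polyfun_def by (rule exI[of _ "[:b, a:]"]) (simp add: algebra_simps)

lemma polyfun_power: "polyfun (\<lambda>z. z ^ m) m"
  unfolding polyfun_def by (rule exI[of _ "monom 1 m"]) (simp add: poly_monom degree_monom_le)

lemma polyfun_mono: "polyfun f d \<Longrightarrow> d \<le> e \<Longrightarrow> polyfun f e"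
  unfolding polyfun_def by (meson order_trans)

lemma polyfun_add: "polyfun f d \<Longrightarrow> polyfun g d \<Longrightarrow> polyfun (\<lambda>z. f z + g z) d"
  unfolding polyfun_def by (metis degree_add_le poly_add)

lemma polyfun_diff: "polyfun f d \<Longrightarrow> polyfun g d \<Longrightarrow> polyfun (\<lambda>z. f z - g z) d"
  unfolding polyfun_def by (metis degree_diff_le poly_diff)

lemma polyfun_cmult: "polyfun f d \<Longrightarrow> polyfun (\<lambda>z. c * f z) d"
  unfolding polyfun_def by (metis degree_smult_le order_trans poly_smult)

lemma polyfun_mult: "polyfun f d \<Longrightarrow> polyfun g e \<Longrightarrow> polyfun (\<lambda>z. f z * g z) (d + e)"
  unfolding polyfun_def by (metis add_mono degree_mult_le order_trans poly_mult)

lemma polyfun_sum: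
  "finite S \<Longrightarrow> (\<And>i. i \<in> S \<Longrightarrow> polyfun (f i) d) \<Longrightarrow> polyfun (\<lambda>z. \<Sum>i\<in>S. f i z) d"
proof (induction S rule: finite_induct)
  case empty
  then show ?case using polyfun_const[of 0 d] by simp
next
  case (insert a S)
  then show ?case using polyfun_add[of "f a" d "\<lambda>z. \<Sum>i\<in>S. f i z"] by simp
qed

lemma polyfun_prod_linear: "finite S \<Longrightarrow> polyfun (\<lambda>z. \<Prod>i\<in>S. a i * z + b i) (card S)"
proof (induction S rule: finite_induct)
  case empty
  then show ?case using polyfun_const[of 1 0] by simp
next
  case (insert i S)
  then show ?case
    using polyfun_mult[OF polyfun_linear[of "a i" "b i"] insert.IH] by simp
qed

lemma polyfun_eq_0_if_card_roots:
  assumes "polyfun f d" "finite Z" "card Z > d" "\<forall>z\<in>Z. f z = 0"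
  shows "f w = 0"
proof -
  obtain p where p: "degree p \<le> d" "\<forall>z. f z = poly p z"
    using assms(1) unfolding polyfun_def by blast
  have "p = 0"
  proof (rule ccontr)
    assume "p \<noteq> 0"
    then have "card {z. poly p z = 0} \<le> degree p" by (rule card_poly_roots_bound)
    moreover have "card Z \<le> card {z. poly p z = 0}"
      using assms(4) p(2) \<open>p \<noteq> 0\<close> by (intro card_mono poly_roots_finite) auto
    ultimately show False using p(1) assms(3) by linarith
  qed
  then show ?thesis using p(2) by simp
qed

lemma polyfun_eq_0_if_infinite_roots:
  assumes "polyfun f d" "infinite {z. f z = 0}"
  shows "f w = 0"
proof -
  obtain Z where "finite Z" "card Z = Suc d" "Z \<subseteq> {z. f z = 0}"
    using infinite_arbitrarily_large[OF assms(2)] by blast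
  then show ?thesis by (intro polyfun_eq_0_if_card_roots[OF assms(1)]) auto
qed

definition clearing_factor :: "(nat \<Rightarrow> K) \<Rightarrow> nat set \<Rightarrow> nat \<Rightarrow> K \<Rightarrow> K" where
  "clearing_factor x V v z = (\<Prod>s\<in>V - {v}. z - x s)"

text \<open>Here \<open>z\<close> replaces \<open>x v\<close>; multiplying by \<open>clearing_factor\<close> turns each kernel with a pole
  at \<open>z = x s\<close> into a linear factor.\<close>
definition cleared_kernel_prod :: "(nat \<Rightarrow> K) \<Rightarrow> nat set \<Rightarrow> nat \<Rightarrow> nat set \<Rightarrow> K \<Rightarrow> K" where
  "cleared_kernel_prod x V v A z =
     (if v \<in> A then (\<Prod>s\<in>V - A. z - \<tau> * x s) * (\<Prod>s\<in>A - {v}. z - x s)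
      else (\<Prod>r\<in>A. \<tau> * z - x r) * (\<Prod>s\<in>V - A - {v}. z - x s))
     * kernel_prod x (A - {v}) (V - A - {v})"

definition cleared_shuffle_sum :: "(nat \<Rightarrow> K) \<Rightarrow> nat set \<Rightarrow> nat \<Rightarrow> nat \<Rightarrow> int \<Rightarrow> int \<Rightarrow> K \<Rightarrow> K" where
  "cleared_shuffle_sum x V v k a b z = (\<Sum>A | A \<subseteq> V \<and> card A = k.
      E_on (x(v := z)) a A * E_on (x(v := z)) b (V - A) * cleared_kernel_prod x V v A z)"

definition cleared_defect :: "(nat \<Rightarrow> K) \<Rightarrow> nat set \<Rightarrow> nat \<Rightarrow> nat \<Rightarrow> K \<Rightarrow> K" where
  "cleared_defect x V v k z = cleared_shuffle_sum x V v k 1 1 z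
     - inverse (\<tau> ^ k) * cleared_shuffle_sum x V v k 0 2 z
     - inverse \<tau> * cleared_shuffle_sum x V v (k + 1) 0 2 z"

lemma clearing_factor_mult_kernel_prod_mem:
  assumes "finite V" "A \<subseteq> V" "v \<in> A" "z \<notin> x ` (V - {v})"
  shows "clearing_factor x V v z * kernel_prod (x(v := z)) A (V - A)
           = (\<Prod>s\<in>V - A. z - \<tau> * x s) * (\<Prod>s\<in>A - {v}. z - x s)
             * kernel_prod x (A - {v}) (V - A - {v})"
proof -
  have fin: "finite (A - {v})" "finite (V - A)" using assms finite_subset by auto
  have "V - {v} = (V - A) \<union> (A - {v})" "(V - A) \<inter> (A - {v}) = {}" using assms by auto
  then have "clearing_factor x V v z = (\<Prod>s\<in>V - A. z - x s) * (\<Prod>s\<in>A - {v}. z - x s)"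
    unfolding clearing_factor_def using fin by (simp add: prod.union_disjoint)
  moreover have "kernel_prod (x(v := z)) A (V - A)
      = (\<Prod>s\<in>V - A. shuffle_kernel (x(v := z)) v s) * kernel_prod x (A - {v}) (V - A - {v})"
    using kernel_prod_insert_left[OF fin(1), of v "x(v := z)" "V - A"] assms(3)
      kernel_prod_upd[of v "A - {v}" "V - A" x z]
    by (simp add: insert_absorb)
  moreover have "(\<Prod>s\<in>V - A. z - x s) * (\<Prod>s\<in>V - A. shuffle_kernel (x(v := z)) v s)
      = (\<Prod>s\<in>V - A. z - \<tau> * x s)"
    unfolding prod.distrib[symmetric]
    using assms(3,4) by (intro prod.cong refl) (auto simp: shuffle_kernel_def)
  ultimately show ?thesis by (simp add: mult_ac)
qed

lemma clearing_factor_mult_kernel_prod_not_mem: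
  assumes "finite V" "v \<in> V" "A \<subseteq> V" "v \<notin> A" "z \<notin> x ` (V - {v})"
  shows "clearing_factor x V v z * kernel_prod (x(v := z)) A (V - A)
           = (\<Prod>r\<in>A. \<tau> * z - x r) * (\<Prod>s\<in>V - A - {v}. z - x s)
             * kernel_prod x (A - {v}) (V - A - {v})"
proof -
  have fin: "finite A" "finite (V - A - {v})" using assms finite_subset by auto
  have "V - {v} = A \<union> (V - A - {v})" "A \<inter> (V - A - {v}) = {}" using assms by auto
  then have "clearing_factor x V v z = (\<Prod>s\<in>A. z - x s) * (\<Prod>s\<in>V - A - {v}. z - x s)"
    unfolding clearing_factor_def using fin by (simp add: prod.union_disjoint)
  moreover have "V - A = insert v (V - A - {v})" using assms by auto
  then have "kernel_prod (x(v := z)) A (V - A)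
      = (\<Prod>r\<in>A. shuffle_kernel (x(v := z)) r v) * kernel_prod x (A - {v}) (V - A - {v})"
    using kernel_prod_insert_right[OF fin(2), of v "x(v := z)" A] assms(4)
      kernel_prod_upd[of v A "V - A - {v}" x z]
    by simp
  moreover have "(\<Prod>r\<in>A. z - x r) * (\<Prod>r\<in>A. shuffle_kernel (x(v := z)) r v)
      = (\<Prod>r\<in>A. \<tau> * z - x r)"
    unfolding prod.distrib[symmetric]
  proof (intro prod.cong refl)
    fix r assume "r \<in> A"
    then have "r \<noteq> v" "x r - z \<noteq> 0" using assms by auto
    then show "(z - x r) * shuffle_kernel (x(v := z)) r v = \<tau> * z - x r"
      unfolding shuffle_kernel_def by (simp add: field_simps)
  qed
  ultimately show ?thesis by (simp add: mult_ac)
qed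

lemma clearing_factor_mult_kernel_prod:
  assumes "finite V" "v \<in> V" "A \<subseteq> V" "z \<notin> x ` (V - {v})"
  shows "clearing_factor x V v z * kernel_prod (x(v := z)) A (V - A)
           = cleared_kernel_prod x V v A z"
  using clearing_factor_mult_kernel_prod_mem[OF assms(1,3) _ assms(4)]
    clearing_factor_mult_kernel_prod_not_mem[OF assms(1-3) _ assms(4)]
  unfolding cleared_kernel_prod_def by (cases "v \<in> A") simp_all

lemma clearing_factor_mult_shuffle_sum:
  assumes "finite V" "v \<in> V" "z \<notin> x ` (V - {v})"
  shows "clearing_factor x V v z * shuffle_sum (x(v := z)) k a b V
           = cleared_shuffle_sum x V v k a b z"
  unfolding shuffle_sum_def cleared_shuffle_sum_def sum_distrib_left shuffle_term_def
  using clearing_factor_mult_kernel_prod[OF assms(1,2) _ assms(3)]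
  by (intro sum.cong refl) (simp add: mult.left_commute)

lemma clearing_factor_mult_defect:
  assumes "finite V" "v \<in> V" "z \<notin> x ` (V - {v})"
  shows "clearing_factor x V v z * defect (x(v := z)) k V = cleared_defect x V v k z"
  unfolding defect_def cleared_defect_def clearing_factor_mult_shuffle_sum[OF assms, symmetric]
  by (simp add: algebra_simps)

lemma polyfun_E_on_upd:
  assumes "finite A" "v \<in> A"
  shows "polyfun (\<lambda>z. E_on (x(v := z)) (int a) A) (a + 2 * (card A - 1))"
proof -
  let ?A = "A - {v}"
  have eq: "E_on (x(v := z)) (int a) A = z ^ a * E_on x (int a) ?A
      * (\<Prod>s\<in>?A. 1 * z + - \<tau> * x s) * (\<Prod>r\<in>?A. - \<tau> * z + x r)" for z
    using E_on_insert[of ?A v "x(v := z)" "int a"] assms by (simp add: insert_absorb E_on_upd)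
  have "polyfun (\<lambda>z. z ^ a * E_on x (int a) ?A * (\<Prod>s\<in>?A. 1 * z + - \<tau> * x s)
      * (\<Prod>r\<in>?A. - \<tau> * z + x r)) (a + 0 + card ?A + card ?A)"
    using assms(1) by (intro polyfun_mult polyfun_power polyfun_const polyfun_prod_linear) simp_all
  then show ?thesis using assms eq by (simp add: mult_2 add.assoc)
qed

lemma polyfun_cleared_kernel_prod:
  assumes "finite V" "v \<in> V" "A \<subseteq> V"
  shows "polyfun (cleared_kernel_prod x V v A) (card V - 1)"
proof (cases "v \<in> A")
  case True
  have "finite A" using assms finite_subset by blast
  then have "card A > 0" using True card_gt_0_iff by blast
  then have "card (V - A) + card (A - {v}) + 0 = card V - 1"
    using assms True card_Diff_subset[of A V] card_mono[of V A] \<open>finite A\<close>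
    by (simp add: card_Diff_singleton)
  moreover have "polyfun (\<lambda>z. (\<Prod>s\<in>V - A. 1 * z + - \<tau> * x s) * (\<Prod>s\<in>A - {v}. 1 * z + - x s)
      * kernel_prod x (A - {v}) (V - A - {v})) (card (V - A) + card (A - {v}) + 0)"
    using assms finite_subset by (intro polyfun_mult polyfun_const polyfun_prod_linear) auto
  ultimately show ?thesis
    unfolding cleared_kernel_prod_def using True by simp
next
  case False
  have "card A < card V" using assms False by (intro psubset_card_mono) auto
  then have "card A + card (V - A - {v}) + 0 = card V - 1"
    using assms False card_Diff_subset[of A V] finite_subset[of A V]
    by (simp add: card_Diff_singleton)
  moreover have "polyfun (\<lambda>z. (\<Prod>r\<in>A. \<tau> * z + - x r) * (\<Prod>s\<in>V - A - {v}. 1 * z + - x s)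
      * kernel_prod x (A - {v}) (V - A - {v})) (card A + card (V - A - {v}) + 0)"
    using assms finite_subset by (intro polyfun_mult polyfun_const polyfun_prod_linear) auto
  ultimately show ?thesis
    unfolding cleared_kernel_prod_def using False by simp
qed

lemma polyfun_cleared_shuffle_sum:
  assumes "finite V" "v \<in> V"
    and "a + 2 * (k - 1) + (card V - 1) \<le> d"
    and "k < card V \<Longrightarrow> b + 2 * (card V - k - 1) + (card V - 1) \<le> d"
  shows "polyfun (cleared_shuffle_sum x V v k (int a) (int b)) d"
  unfolding cleared_shuffle_sum_def[abs_def]
proof (intro polyfun_sum)
  show "finite {A. A \<subseteq> V \<and> card A = k}"
    using assms(1) by (auto intro: finite_subset[of _ "Pow V"])
next
  fix A assume "A \<in> {A. A \<subseteq> V \<and> card A = k}"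
  then have A: "A \<subseteq> V" "card A = k" by auto
  have fin: "finite A" "finite (V - A)" using A assms(1) finite_subset by auto
  have kernels: "polyfun (cleared_kernel_prod x V v A) (card V - 1)"
    using polyfun_cleared_kernel_prod[OF assms(1,2) A(1)] .
  show "polyfun (\<lambda>z. E_on (x(v := z)) (int a) A * E_on (x(v := z)) (int b) (V - A)
      * cleared_kernel_prod x V v A z) d"
  proof (cases "v \<in> A")
    case True
    have "polyfun (\<lambda>z. E_on (x(v := z)) (int a) A * E_on (x(v := z)) (int b) (V - A)
        * cleared_kernel_prod x V v A z) (a + 2 * (card A - 1) + 0 + (card V - 1))"
      using True E_on_upd[of v "V - A" x _ "int b"]
      by (intro polyfun_mult polyfun_E_on_upd kernels fin True) (simp add: polyfun_const)
    then show ?thesis using A assms(3) by (auto intro: polyfun_mono)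
  next
    case False
    then have "v \<in> V - A" using assms(2) by simp
    then have "k < card V"
      using A fin assms(1) by (metis card_Diff_subset card_gt_0_iff empty_iff zero_less_diff)
    moreover have "card (V - A) = card V - k" using A fin by (simp add: card_Diff_subset)
    moreover have "polyfun (\<lambda>z. E_on (x(v := z)) (int a) A * E_on (x(v := z)) (int b) (V - A)
        * cleared_kernel_prod x V v A z) (0 + (b + 2 * (card (V - A) - 1)) + (card V - 1))"
      using False \<open>v \<in> V - A\<close> E_on_upd[of v A x _ "int a"]
      by (intro polyfun_mult polyfun_E_on_upd kernels fin) (simp_all add: polyfun_const)
    ultimately show ?thesis using assms(4) by (auto intro: polyfun_mono)
  qed
qed

lemma polyfun_cleared_defect:
  assumes "finite V" "v \<in> V" "card V = 2 * k" "1 \<le> k"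
  shows "polyfun (cleared_defect x V v k) (4 * k - 1)"
proof -
  have "polyfun (cleared_shuffle_sum x V v k (int 1) (int 1)) (4 * k - 1)"
    and "polyfun (cleared_shuffle_sum x V v k (int 0) (int 2)) (4 * k - 1)"
    and "polyfun (cleared_shuffle_sum x V v (k + 1) (int 0) (int 2)) (4 * k - 1)"
    using assms by (intro polyfun_cleared_shuffle_sum; simp)+
  then have "polyfun (\<lambda>z. cleared_shuffle_sum x V v k 1 1 z
      - inverse (\<tau> ^ k) * cleared_shuffle_sum x V v k 0 2 z
      - inverse \<tau> * cleared_shuffle_sum x V v (k + 1) 0 2 z) (4 * k - 1)"
    by (intro polyfun_diff polyfun_cmult) simp_all
  then show ?thesis unfolding cleared_defect_def[abs_def] .
qed

section \<open>Vanishing of the defect\<close>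

lemma cleared_kernel_prods_cancel:
  assumes V: "finite V" "v \<in> V" "s \<in> V" "s \<noteq> v" and inj: "inj_on x V"
    and C: "C \<subseteq> V - {v, s}"
  shows "cleared_kernel_prod x V v (insert v C) (x s) + cleared_kernel_prod x V v (insert s C) (x s)
           = 0"
proof -
  define z where "z = x s"
  define D where "D = V - {v, s} - C"
  have fC: "finite C" and fD: "finite D" using C V finite_subset unfolding D_def by auto
  have nC: "v \<notin> C" "s \<notin> C" and nD: "v \<notin> D" "s \<notin> D" using C unfolding D_def by auto
  have VvC: "V - insert v C = insert s D" and VsC: "V - insert s C = insert v D"
    using C V unfolding D_def by auto
  have xC: "x c - x s \<noteq> 0" if "c \<in> C" for c
    using that C V inj by (auto dest: inj_onD)
  have xD: "x s - x d \<noteq> 0" if "d \<in> D" for d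
    using that V inj unfolding D_def by (auto dest: inj_onD)
  have kC: "(\<Prod>c\<in>C. z - x c) * (\<Prod>c\<in>C. shuffle_kernel x c s) = (\<Prod>c\<in>C. \<tau> * z - x c)"
    unfolding prod.distrib[symmetric] using xC
    by (intro prod.cong refl) (simp add: shuffle_kernel_def z_def field_simps)
  have kD: "(\<Prod>d\<in>D. z - x d) * (\<Prod>d\<in>D. shuffle_kernel x s d) = (\<Prod>d\<in>D. z - \<tau> * x d)"
    unfolding prod.distrib[symmetric] using xD
    by (intro prod.cong refl) (simp add: shuffle_kernel_def z_def field_simps)
  have "cleared_kernel_prod x V v (insert v C) z
      = (\<Prod>t\<in>insert s D. z - \<tau> * x t) * (\<Prod>c\<in>C. z - x c) * kernel_prod x C (insert s D)"
    unfolding cleared_kernel_prod_def VvC using nC nD V by (simp add: insert_Diff_if)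
  also have "\<dots> = (z - \<tau> * x s) * (\<Prod>d\<in>D. z - \<tau> * x d) * (\<Prod>c\<in>C. \<tau> * z - x c)
      * kernel_prod x C D"
    using fD nD kC by (simp add: kernel_prod_insert_right mult_ac)
  finally have vC: "cleared_kernel_prod x V v (insert v C) z = \<dots>" .
  have "cleared_kernel_prod x V v (insert s C) z
      = (\<Prod>r\<in>insert s C. \<tau> * z - x r) * (\<Prod>d\<in>D. z - x d) * kernel_prod x (insert s C) D"
    unfolding cleared_kernel_prod_def VsC using nC nD V by (simp add: insert_Diff_if)
  also have "\<dots> = (\<tau> * z - x s) * (\<Prod>c\<in>C. \<tau> * z - x c) * (\<Prod>d\<in>D. z - \<tau> * x d)
      * kernel_prod x C D"
    using fC nC kD by (simp add: kernel_prod_insert_left mult_ac)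
  finally have sC: "cleared_kernel_prod x V v (insert s C) z = \<dots>" .
  show ?thesis
    unfolding z_def[symmetric] vC sC by (simp add: z_def algebra_simps)
qed

lemma cleared_shuffle_terms_cancel:
  assumes V: "finite V" "v \<in> V" "s \<in> V" "s \<noteq> v" and inj: "inj_on x V"
    and C: "C \<subseteq> V - {v, s}"
  shows "E_on (x(v := x s)) a (insert v C) * E_on (x(v := x s)) b (V - insert v C)
           * cleared_kernel_prod x V v (insert v C) (x s)
         + E_on (x(v := x s)) a (insert s C) * E_on (x(v := x s)) b (V - insert s C)
           * cleared_kernel_prod x V v (insert s C) (x s) = 0"
proof -
  define y where "y = x(v := x s)"
  define D where "D = V - {v, s} - C"
  have fC: "finite C" and fD: "finite D" using C V finite_subset unfolding D_def by auto
  have nC: "v \<notin> C" "s \<notin> C" and nD: "v \<notin> D" "s \<notin> D" using C unfolding D_def by auto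
  have VvC: "V - insert v C = insert s D" and VsC: "V - insert s C = insert v D"
    using C V unfolding D_def by auto
  have yvs: "y v = y s" unfolding y_def using V by simp
  have "E_on y a (insert v C) = E_on y a (insert s C)"
    unfolding E_on_insert[OF fC nC(1)] E_on_insert[OF fC nC(2)] yvs ..
  moreover have "E_on y b (V - insert v C) = E_on y b (V - insert s C)"
    unfolding VvC VsC E_on_insert[OF fD nD(1)] E_on_insert[OF fD nD(2)] yvs ..
  ultimately show ?thesis
    using cleared_kernel_prods_cancel[OF V inj C] unfolding y_def[symmetric]
    by (simp flip: distrib_left)
qed

lemma cleared_shuffle_sum_root:
  assumes V: "finite V" "v \<in> V" "s \<in> V" "s \<noteq> v" and inj: "inj_on x V" and k: "1 \<le> k"
  shows "cleared_shuffle_sum x V v k a b (x s) = 0"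
proof -
  let ?T = "\<lambda>A. E_on (x(v := x s)) a A * E_on (x(v := x s)) b (V - A)
    * cleared_kernel_prod x V v A (x s)"
  let ?S = "{A. A \<subseteq> V \<and> card A = k}"
  let ?Sv = "{A. A \<subseteq> V \<and> card A = k \<and> v \<in> A \<and> s \<notin> A}"
  let ?Ss = "{A. A \<subseteq> V \<and> card A = k \<and> s \<in> A \<and> v \<notin> A}"
  have finS: "finite ?S" using V(1) by (auto intro: finite_subset[of _ "Pow V"])
  have "cleared_shuffle_sum x V v k a b (x s) = sum ?T (?Sv \<union> ?Ss)"
    unfolding cleared_shuffle_sum_def
  proof (rule sum.mono_neutral_right[OF finS])
    show "\<forall>A\<in>?S - (?Sv \<union> ?Ss). ?T A = 0"
    proof
      fix A assume A: "A \<in> ?S - (?Sv \<union> ?Ss)"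
      then have "finite A" using V(1) finite_subset by auto
      then have "cleared_kernel_prod x V v A (x s) = 0"
        using A V unfolding cleared_kernel_prod_def by (cases "v \<in> A") (auto intro!: prod_zero)
      then show "?T A = 0" by simp
    qed
  qed auto
  also have "\<dots> = sum ?T ?Sv + sum ?T ?Ss"
    by (rule sum.union_disjoint) (auto intro: finite_subset[OF _ finS])
  also have "\<dots> = (\<Sum>C | C \<subseteq> V - {v, s} \<and> card C = k - 1. ?T (insert v C) + ?T (insert s C))"
    using sum_subsets_separating[OF V(1,2,3) V(4)[symmetric] k, of ?T]
      sum_subsets_separating[OF V(1,3,2) V(4) k, of ?T]
    by (simp add: sum.distrib insert_commute)
  also have "\<dots> = 0"
    using cleared_shuffle_terms_cancel[OF V inj] by (intro sum.neutral) simp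
  finally show ?thesis .
qed

lemma cleared_defect_root:
  assumes "finite V" "v \<in> V" "s \<in> V" "s \<noteq> v" "inj_on x V" "1 \<le> k"
  shows "cleared_defect x V v k (x s) = 0"
  unfolding cleared_defect_def
  using cleared_shuffle_sum_root[OF assms] cleared_shuffle_sum_root[OF assms(1-5), of "k + 1"]
  by simp

lemma inj_on_upd:
  assumes "inj_on x V" "z \<notin> x ` (V - {v})"
  shows "inj_on (x(v := z)) V"
  using assms unfolding inj_on_def by (auto simp: image_iff)

lemma cleared_defect_wheel_root:
  assumes V: "finite V" "card V = 2 * k" "u \<in> V" "v \<in> V" "u \<noteq> v" and k: "2 \<le> k"
    and inj: "inj_on x V" and z: "z \<notin> x ` (V - {v})" "z = \<tau> * x u \<or> x u = \<tau> * z"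
    and defect_less: "defect (x(v := z)) (k - 1) (V - {u, v}) = 0"
  shows "cleared_defect x V v k z = 0"
proof -
  have inj': "inj_on (x(v := z)) V" using inj z(1) by (rule inj_on_upd)
  have "defect (x(v := z)) k V = 0"
    using z(2)
  proof
    assume "z = \<tau> * x u"
    then show ?thesis
      using defect_wheel[OF V(1-5) inj' _ k] defect_less V(5) by simp
  next
    assume "x u = \<tau> * z"
    moreover have "V - {v, u} = V - {u, v}" by auto
    ultimately show ?thesis
      using defect_wheel[OF V(1,2,4,3) V(5)[symmetric] inj' _ k] defect_less V(5) by simp
  qed
  then show ?thesis using clearing_factor_mult_defect[OF V(1,4) z(1), of k] by simp
qed

lemma defect_eq_0_if_cleared_defect:
  assumes "finite V" "v \<in> V" "inj_on x V" "cleared_defect x V v k (x v) = 0"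
  shows "defect x k V = 0"
proof -
  have "x v \<notin> x ` (V - {v})" using assms(2,3) by (auto dest: inj_onD)
  moreover from this have "clearing_factor x V v (x v) \<noteq> 0"
    unfolding clearing_factor_def using assms(1) by (auto simp: prod_zero_iff)
  ultimately show ?thesis
    using clearing_factor_mult_defect[OF assms(1,2), of "x v" x k] assms(4) by simp
qed

text \<open>The case \<open>i = j\<close> forces \<open>x i \<noteq> 0\<close>, as \<open>\<tau> \<noteq> 1\<close>.\<close>
definition generic_on :: "(nat \<Rightarrow> K) \<Rightarrow> nat set \<Rightarrow> bool" where
  "generic_on x U \<longleftrightarrow> (\<forall>i\<in>U. \<forall>j\<in>U. x i \<noteq> \<tau> * x j \<and> x i \<noteq> \<tau>\<^sup>2 * x j)"

lemma generic_on_subset: "generic_on x U \<Longrightarrow> W \<subseteq> U \<Longrightarrow> generic_on x W"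
  unfolding generic_on_def by blast

lemma finite_nongeneric_upd:
  assumes "finite U" "generic_on x (U - {w})"
  shows "finite {z. \<not> generic_on (x(w := z)) U}"
proof (rule finite_subset)
  let ?B = "insert 0 ((\<lambda>j. \<tau> * x j) ` U \<union> (\<lambda>j. \<tau>\<^sup>2 * x j) ` U \<union> (\<lambda>j. x j / \<tau>) ` U
      \<union> (\<lambda>j. x j / \<tau>\<^sup>2) ` U)"
  show "finite ?B" using assms(1) by simp
  show "{z. \<not> generic_on (x(w := z)) U} \<subseteq> ?B"
  proof
    fix z assume "z \<in> {z. \<not> generic_on (x(w := z)) U}"
    then obtain i j where ij: "i \<in> U" "j \<in> U"
      "(x(w := z)) i = \<tau> * (x(w := z)) j \<or> (x(w := z)) i = \<tau>\<^sup>2 * (x(w := z)) j"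
      unfolding generic_on_def by blast
    have \<tau>: "\<tau> \<noteq> 1" "\<tau>\<^sup>2 \<noteq> 1" using \<tau>_power_neq_1[of 1] \<tau>_power_neq_1[of 2] by simp_all
    consider "i = w" "j = w" | "i = w" "j \<noteq> w" | "i \<noteq> w" "j = w" | "i \<noteq> w" "j \<noteq> w"
      by blast
    then show "z \<in> ?B"
    proof cases
      case 1
      then have "z = \<tau> * z \<or> z = \<tau>\<^sup>2 * z" using ij(3) by simp
      then have "z = 0" using \<tau> by (metis mult_cancel_right2)
      then show ?thesis by simp
    next
      case 2
      then show ?thesis using ij by auto
    next
      case 3
      then have "z = x i / \<tau> \<or> z = x i / \<tau>\<^sup>2" using ij(3) \<tau>_nonzero by (auto simp: field_simps)
      then show ?thesis using ij(1) by blast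
    next
      case 4
      then show ?thesis using ij assms(2) unfolding generic_on_def by auto
    qed
  qed
qed

lemma card_wheel_roots:
  assumes "finite W" "inj_on x W" "generic_on x W"
  shows "card (x ` W \<union> (\<lambda>u. \<tau> * x u) ` W \<union> (\<lambda>u. x u / \<tau>) ` W) = 3 * card W"
proof -
  have inj: "inj_on (\<lambda>u. \<tau> * x u) W" "inj_on (\<lambda>u. x u / \<tau>) W"
    using assms(2) \<tau>_nonzero by (auto simp: inj_on_def)
  have ne: "x s \<noteq> \<tau> * x u" "x s \<noteq> \<tau> * (\<tau> * x u)" if "s \<in> W" "u \<in> W" for s u
    using assms(3) that unfolding generic_on_def power2_eq_square mult.assoc by blast+
  have div: "c = x u / \<tau> \<longleftrightarrow> x u = \<tau> * c" for u c
    using \<tau>_nonzero by (auto simp: eq_divide_eq mult.commute)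
  have "x ` W \<inter> (\<lambda>u. \<tau> * x u) ` W = {}" using ne by blast
  moreover have "x ` W \<inter> (\<lambda>u. x u / \<tau>) ` W = {}" "(\<lambda>u. \<tau> * x u) ` W \<inter> (\<lambda>u. x u / \<tau>) ` W = {}"
    using ne by (auto simp: div)
  ultimately show ?thesis
    using assms(1) by (simp add: card_Un_disjoint Int_Un_distrib2 card_image[OF assms(2)]
        card_image[OF inj(1)] card_image[OF inj(2)])
qed

lemma cleared_defect_eq_0_on_wheel_roots:
  assumes k: "2 \<le> k" and V: "finite V" "card V = 2 * k" "v \<in> V"
    and inj: "inj_on x V" and generic: "generic_on x (V - {v})"
    and defect_less: "\<And>U y. finite U \<Longrightarrow> card U = 2 * (k - 1) \<Longrightarrow> inj_on y U
      \<Longrightarrow> defect y (k - 1) U = 0"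
    and z: "z \<in> x ` (V - {v}) \<union> (\<lambda>u. \<tau> * x u) ` (V - {v}) \<union> (\<lambda>u. x u / \<tau>) ` (V - {v})"
  shows "cleared_defect x V v k z = 0"
proof -
  let ?W = "V - {v}"
  have less: "defect (x(v := z)) (k - 1) (V - {u, v}) = 0" if "u \<in> ?W" for u
  proof (rule defect_less)
    show "finite (V - {u, v})" "card (V - {u, v}) = 2 * (k - 1)"
      using that V by (auto simp: card_Diff_subset)
    have "inj_on x (V - {u, v})" using inj by (rule inj_on_subset) blast
    moreover have "inj_on (x(v := z)) (V - {u, v}) = inj_on x (V - {u, v})"
      by (rule inj_on_cong) simp
    ultimately show "inj_on (x(v := z)) (V - {u, v})" by simp
  qed
  have not_value: "z \<notin> x ` ?W" if "z = \<tau> * x u \<or> x u = \<tau> * z" "u \<in> ?W" for u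
  proof
    assume "z \<in> x ` ?W"
    then obtain s where "s \<in> ?W" "z = x s" by blast
    with that generic show False unfolding generic_on_def by metis
  qed
  from z show ?thesis
  proof (elim UnE imageE)
    fix s assume "s \<in> ?W" "z = x s"
    then show ?thesis using cleared_defect_root[OF V(1,3) _ _ inj] k by auto
  next
    fix u assume u: "u \<in> ?W" and "z = \<tau> * x u"
    then show ?thesis
      using cleared_defect_wheel_root[OF V(1,2) _ V(3) _ k inj not_value[OF _ u]] less[OF u]
      by auto
  next
    fix u assume u: "u \<in> ?W" and "z = x u / \<tau>"
    then have "x u = \<tau> * z" using \<tau>_nonzero by simp
    then show ?thesis
      using cleared_defect_wheel_root[OF V(1,2) _ V(3) _ k inj not_value[OF _ u]] less[OF u] u
      by auto
  qed
qed

lemma defect_eq_0_generic: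
  assumes k: "2 \<le> k" and V: "finite V" "card V = 2 * k" "v \<in> V"
    and inj: "inj_on x V" and generic: "generic_on x (V - {v})"
    and defect_less: "\<And>U y. finite U \<Longrightarrow> card U = 2 * (k - 1) \<Longrightarrow> inj_on y U
      \<Longrightarrow> defect y (k - 1) U = 0"
  shows "defect x k V = 0"
proof -
  let ?W = "V - {v}"
  let ?Z = "x ` ?W \<union> (\<lambda>u. \<tau> * x u) ` ?W \<union> (\<lambda>u. x u / \<tau>) ` ?W"
  have "polyfun (cleared_defect x V v k) (4 * k - 1)"
    using V k by (intro polyfun_cleared_defect) simp_all
  moreover have "finite ?Z" using V(1) by simp
  moreover have "card ?Z = 3 * (2 * k - 1)"
    using card_wheel_roots[of ?W x] inj_on_subset[OF inj, of ?W] generic V by simp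
  then have "card ?Z > 4 * k - 1" using k by simp
  moreover have "\<forall>z\<in>?Z. cleared_defect x V v k z = 0"
    using cleared_defect_eq_0_on_wheel_roots[OF k V inj generic defect_less] by blast
  ultimately have "cleared_defect x V v k (x v) = 0"
    by (rule polyfun_eq_0_if_card_roots)
  then show ?thesis by (rule defect_eq_0_if_cleared_defect[OF V(1,3) inj])
qed

lemma defect_eq_0_if_cofinite:
  assumes k: "1 \<le> k" and V: "finite V" "card V = 2 * k" "w \<in> V" and inj: "inj_on x V"
    and B: "finite B" "\<And>z. z \<notin> B \<Longrightarrow> z \<notin> x ` (V - {w}) \<Longrightarrow> defect (x(w := z)) k V = 0"
  shows "defect x k V = 0"
proof -
  have "cleared_defect x V w k z = 0" if "z \<notin> B \<union> x ` (V - {w})" for z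
    using that B(2)[of z] clearing_factor_mult_defect[OF V(1,3), of z x k] by simp
  then have "UNIV - (B \<union> x ` (V - {w})) \<subseteq> {z. cleared_defect x V w k z = 0}" by blast
  moreover have "infinite (UNIV - (B \<union> x ` (V - {w})))"
    using infinite_UNIV_K B(1) V(1) by (simp add: Diff_infinite_finite)
  ultimately have "infinite {z. cleared_defect x V w k z = 0}" using infinite_super by blast
  then have "cleared_defect x V w k (x w) = 0"
    by (rule polyfun_eq_0_if_infinite_roots[OF polyfun_cleared_defect[OF V(1,3,2) k]])
  then show ?thesis by (rule defect_eq_0_if_cleared_defect[OF V(1,3) inj])
qed

lemma defect_eq_0_if_generic_case:
  assumes k: "1 \<le> k" and V: "finite V" "card V = 2 * k"
    and generic_case: "\<And>y. inj_on y V \<Longrightarrow> generic_on y V \<Longrightarrow> defect y k V = 0"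
    and inj: "inj_on x V"
  shows "defect x k V = 0"
proof -
  have generic_off: "\<forall>x. inj_on x V \<longrightarrow> generic_on x (V - W) \<longrightarrow> defect x k V = 0"
    if "W \<subseteq> V" for W
    using finite_subset[OF that V(1)] that
  proof (induction W rule: finite_subset_induct)
    case empty
    then show ?case by (simp add: generic_case)
  next
    case (insert w W)
    show ?case
    proof (intro allI impI)
      fix x assume inj: "inj_on x V" and generic: "generic_on x (V - insert w W)"
      let ?B = "{z. \<not> generic_on (x(w := z)) (V - W)}"
      have "generic_on x (V - W - {w})" using generic by (metis Diff_insert)
      then have "finite ?B" using V(1) by (intro finite_nongeneric_upd) simp_all
      moreover have "defect (x(w := z)) k V = 0" if "z \<notin> ?B" "z \<notin> x ` (V - {w})" for z
      proof -
        have "generic_on (x(w := z)) (V - W)" using that(1) by simp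
        then show ?thesis by (rule insert.IH[rule_format, OF inj_on_upd[OF inj that(2)]])
      qed
      ultimately show "defect x k V = 0"
        by (rule defect_eq_0_if_cofinite[OF k V insert.hyps(2) inj])
    qed
  qed
  then show ?thesis using generic_off[of V] inj by (simp add: generic_on_def)
qed

lemma defect_eq_0:
  "1 \<le> k \<Longrightarrow> finite V \<Longrightarrow> card V = 2 * k \<Longrightarrow> inj_on x V \<Longrightarrow> defect x k V = 0"
proof (induction k arbitrary: V x rule: nat_induct_at_least)
  case base
  then show ?case using defect_card_2[of V x] by simp
next
  case (Suc k)
  have "V \<noteq> {}" using Suc.prems(2) by (intro notI) simp
  then obtain v where v: "v \<in> V" by blast
  show ?case
  proof (rule defect_eq_0_if_generic_case[OF _ Suc.prems(1,2) _ Suc.prems(3)])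
    fix y assume y: "inj_on y V" "generic_on y V"
    show "defect y (Suc k) V = 0"
    proof (rule defect_eq_0_generic[OF _ Suc.prems(1,2) v y(1)])
      show "2 \<le> Suc k" using Suc.hyps by simp
      show "generic_on y (V - {v})" using y(2) by (rule generic_on_subset) blast
      show "defect z (Suc k - 1) U = 0"
        if "finite U" "card U = 2 * (Suc k - 1)" "inj_on z U" for U z
        using Suc.IH that by simp
    qed
  qed simp
qed

theorem lemma6p7:
  fixes k :: nat and n :: int and x :: "nat \<Rightarrow> K"
  assumes "k \<ge> 1"
    and "inj_on x {..<2*k}"
    and "\<forall>i<2*k. x i \<noteq> 0"
  shows "shuffle k k (E k n) (E k n) x
           - qq ^ (2*k) * shuffle k k (E k (n-1)) (E k (n+1)) x
         = qq ^ 2 * shuffle (k+1) (k-1) (E (k+1) (n-1)) (E (k-1) (n+1)) x"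
proof -
  let ?V = "{..<2*k}"
  let ?P = "\<Prod>r\<in>?V. x r powi (n - 1)"
  have kk: "k + k = 2 * k" "k + 1 + (k - 1) = 2 * k" using assms(1) by simp_all
  have shift: "shuffle_sum x j (a + (n - 1)) (b + (n - 1)) ?V = ?P * shuffle_sum x j a b ?V"
    for j a b
    using shuffle_sum_shift[of ?V x] assms(3) by simp
  have shuffle_sums:
      "shuffle k k (E k n) (E k n) x = ?P * shuffle_sum x k 1 1 ?V"
      "shuffle k k (E k (n-1)) (E k (n+1)) x = ?P * shuffle_sum x k 0 2 ?V"
      "shuffle (k+1) (k-1) (E (k+1) (n-1)) (E (k-1) (n+1)) x = ?P * shuffle_sum x (k+1) 0 2 ?V"
    using shift[of k 1 1] shift[of k 0 2] shift[of "k + 1" 0 2]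
    unfolding shuffle_eq_shuffle_sum kk by (simp_all add: add.commute)
  have q: "qq ^ (2*k) = inverse (\<tau> ^ k)" "qq ^ 2 = inverse \<tau>"
    by (simp_all add: \<tau>_def power_mult power_inverse)
  have "?P * shuffle_sum x k 1 1 ?V - inverse (\<tau> ^ k) * (?P * shuffle_sum x k 0 2 ?V)
      - inverse \<tau> * (?P * shuffle_sum x (k+1) 0 2 ?V) = ?P * defect x k ?V"
    unfolding defect_def by (simp add: algebra_simps)
  also have "\<dots> = 0"
    using defect_eq_0[OF assms(1) _ _ assms(2)] by simp
  finally show ?thesis
    unfolding shuffle_sums q by (simp add: algebra_simps)
qed

end
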